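(* Let $W$ be a real $p\times p$ matrix that is similar to a symmetric positive semidefinite matrix and satisfies $\mathrm{tr}(W)>0$. Let $c>0$, $\hat\alpha=c\,\mathrm{tr}(W)$ and $V=(W+\hat\alpha I_p)^{-1}$. Then: (1) $1/(1+c)\le\mathrm{tr}(VW)\le p/(1+cp)$; (2) $p^2/(1+cp)\le\mathrm{tr}(V)\,\mathrm{tr}(W)\le p/c$; (3) $\mathrm{tr}(V^2W)\le\mathrm{tr}(V)/(1+cp)\le\mathrm{tr}(V)$; (4) $\mathrm{tr}(V^3W)\le\mathrm{tr}(V^2)/(1+cp)\le(\mathrm{tr}V)^2/(1+cp)$; (5) $\mathrm{tr}(V^3W)\le\mathrm{tr}(V^2W)\,\mathrm{tr}(V)$; (6) $\mathrm{tr}(V^2)\le(\mathrm{tr}V)^2\big[1-(p-1)c/\{p(1+c)\}\big]$; (7) $\mathrm{tr}(V^3W)\le\mathrm{tr}(V^2W)\,\mathrm{tr}(V)\big[1-(p-1)c/\{p(1+c)\}\big]$; (8) $-c\{\mathrm{tr}(V)\mathrm{tr}(W)-\mathrm{tr}(VW)\}/(1+cp)\le-\mathrm{tr}(VW)+(1+c)\mathrm{tr}(V^2W^2)\le0$.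
   Context: In the paper this is applied with $W=(X-\bar X)(X-\bar X)^\top\Sigma^{-1}$ in the case $n-1\ge p$, where $\bar X$ is the matrix whose columns all equal the sample mean of the columns of $X$ and $\Sigma$ is positive definite; such $W$ is similar to the symmetric positive semidefinite matrix $\Sigma^{-1/2}(X-\bar X)(X-\bar X)^\top\Sigma^{-1/2}$. *)

theory Defs
  imports "HOL-Analysis.Analysis"
begin

definition symmetric_matrix :: "real^'n^'n \<Rightarrow> bool" where
  "symmetric_matrix A \<longleftrightarrow> transpose A = A"

definition pos_semidef :: "real^'n^'n \<Rightarrow> bool" where
  "pos_semidef A \<longleftrightarrow> symmetric_matrix A \<and> (\<forall>x. 0 \<le> x \<bullet> (A *v x))"

definition similar_mat :: "real^'n^'n \<Rightarrow> real^'n^'n \<Rightarrow> bool" where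
  "similar_mat A B \<longleftrightarrow> (\<exists>P. invertible P \<and> A = matrix_inv P ** B ** P)"

end

(*
  Conjugating by the matrix that diagonalizes the positive semidefinite matrix similar to W
  turns W into diag(l) with l >= 0 and V into diag(a) with a_i = 1/(l_i + c T), T = sum l.
  Every trace in the statement thereby becomes a sum over the eigenvalues.  The scalar
  inequalities rest on two facts.  First, a_i l_i = 1 - c T a_i is ordered opposite to a, so
  Chebyshev's sum inequality bounds sum x_i a_i l_i by (sum x) (sum a_i l_i) / p, p the
  dimension, for every x ordered like a; combined with sum a_i l_i <= p/(1+cp), which is AM-HM
  for the a_i, this gives (3), (4) and (8).  Second, 1/((1+c)T) <= a_i <= 1/(cT) forces every
  a_i to be at least c/(1+c) times every other, whence a_i (1+pc)/(1+c) <= tr V, which gives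
  (6) and (7).
*)

theory Submission
  imports Defs
begin

section \<open>Inequalities for the eigenvalues\<close>

lemma Chebyshev_sum_upper_pairwise:
  fixes x y :: "'a \<Rightarrow> 'b::linordered_idom"
  assumes "\<And>i j. i \<in> A \<Longrightarrow> j \<in> A \<Longrightarrow> (x i - x j) * (y i - y j) \<le> 0"
  shows "of_nat (card A) * (\<Sum>i\<in>A. x i * y i) \<le> (\<Sum>i\<in>A. x i) * (\<Sum>i\<in>A. y i)"
proof -
  have "(\<Sum>i\<in>A. \<Sum>j\<in>A. (x i - x j) * (y i - y j)) \<le> 0"
    by (intro sum_nonpos) (use assms in auto)
  moreover have "(\<Sum>i\<in>A. \<Sum>j\<in>A. (x i - x j) * (y i - y j)) =
     2 * (of_nat (card A) * (\<Sum>i\<in>A. x i * y i)) - 2 * ((\<Sum>i\<in>A. x i) * (\<Sum>i\<in>A. y i))"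
    by (simp add: algebra_simps sum.distrib sum_subtractf sum_distrib_left sum_distrib_right
         sum.swap[of "\<lambda>i j. x j * y i"])
  ultimately show ?thesis by simp
qed

lemma card_squared_le_sum_mult_sum_inverse:
  fixes x :: "'a \<Rightarrow> real"
  assumes "\<And>i. i \<in> A \<Longrightarrow> 0 < x i"
  shows "(real (card A))^2 \<le> (\<Sum>i\<in>A. x i) * (\<Sum>i\<in>A. 1 / x i)"
proof -
  have "(\<Sum>i\<in>A. sqrt (x i) * (1 / sqrt (x i)))^2
      \<le> (\<Sum>i\<in>A. (sqrt (x i))^2) * (\<Sum>i\<in>A. (1 / sqrt (x i))^2)"
    by (rule Cauchy_Schwarz_ineq_sum)
  also have "\<dots> = (\<Sum>i\<in>A. x i) * (\<Sum>i\<in>A. 1 / x i)"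
    using assms by (simp add: power_divide less_imp_le)
  also have "(\<Sum>i\<in>A. sqrt (x i) * (1 / sqrt (x i))) = (\<Sum>i\<in>A. 1)"
    using assms by (intro sum.cong) (auto simp: less_imp_neq[symmetric])
  finally show ?thesis by simp
qed

lemma one_add_div_le_contraction:
  fixes p c :: real
  assumes "0 < p" "0 \<le> c"
  shows "(1 + c) / (1 + p * c) \<le> 1 - (p - 1) * c / (p * (1 + c))"
proof -
  have "(p * (1 + c) - (p - 1) * c) * (1 + p * c) - (1 + c) * (p * (1 + c)) = c * (p - 1)^2"
    by (simp add: algebra_simps power2_eq_square)
  moreover have "0 \<le> c * (p - 1)^2" using assms by simp
  ultimately have "(1 + c) * (p * (1 + c)) \<le> (p * (1 + c) - (p - 1) * c) * (1 + p * c)"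
    by linarith
  moreover have "0 < 1 + p * c" "0 < p * (1 + c)" using assms by (simp_all add: add_pos_nonneg)
  ultimately show ?thesis by (simp add: field_simps)
qed

locale resolvent_weights =
  fixes l a :: "'n::finite \<Rightarrow> real" and c p :: real
  assumes l_nonneg: "\<And>i. 0 \<le> l i" and sum_l_pos: "0 < sum l UNIV" and c_pos: "0 < c"
    and a_eq: "\<And>i. a i = 1 / (l i + c * sum l UNIV)"
  defines "p \<equiv> real CARD('n)"
begin

abbreviation T :: real where "T \<equiv> sum l UNIV"

lemma p_ge_1: "1 \<le> p"
  by (simp add: p_def Suc_le_eq)

lemma one_add_cp_ge_1: "1 \<le> 1 + c * p"
  using c_pos p_ge_1 by simp

lemma shifted_l_pos: "0 < l i + c * T"
  using l_nonneg[of i] c_pos sum_l_pos by (simp add: add_nonneg_pos)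

lemma a_pos: "0 < a i"
  using shifted_l_pos by (simp add: a_eq)

lemma a_mult_l: "a i * l i = 1 - c * T * a i"
  using shifted_l_pos[of i] by (simp add: a_eq field_simps)

lemma a_le_sum_a: "a i \<le> sum a UNIV"
  by (rule member_le_sum) (auto intro: a_pos less_imp_le)

lemma l_le_T: "l i \<le> T"
  by (rule member_le_sum) (auto intro: l_nonneg)

lemma a_le: "a i \<le> 1 / (c * T)"
  using l_nonneg[of i] c_pos sum_l_pos by (simp add: a_eq frac_le)

lemma a_ge: "1 / ((1 + c) * T) \<le> a i"
  unfolding a_eq using shifted_l_pos l_le_T by (intro frac_le) (auto simp: algebra_simps)

lemma sum_a_ge: "p^2 / (T * (1 + c * p)) \<le> sum a UNIV"
proof -
  have "p^2 \<le> (\<Sum>i\<in>UNIV. l i + c * T) * (\<Sum>i\<in>UNIV. 1 / (l i + c * T))"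
    using card_squared_le_sum_mult_sum_inverse[of UNIV "\<lambda>i. l i + c * T"] shifted_l_pos
    by (simp add: p_def)
  also have "(\<Sum>i\<in>UNIV. l i + c * T) = T * (1 + c * p)"
    by (simp add: sum.distrib algebra_simps p_def)
  finally have "p^2 \<le> sum a UNIV * (T * (1 + c * p))"
    by (simp add: a_eq[symmetric] mult.commute)
  moreover have "0 < T * (1 + c * p)" using sum_l_pos one_add_cp_ge_1 by simp
  ultimately show ?thesis by (simp add: pos_divide_le_eq)
qed

lemma sum_a_le: "sum a UNIV \<le> p / (c * T)"
  using sum_mono[of UNIV a "\<lambda>_. 1 / (c * T)"] a_le by (simp add: p_def)

lemma sum_a_mult_l: "(\<Sum>i\<in>UNIV. a i * l i) = p - c * T * sum a UNIV"
  by (simp add: a_mult_l sum_subtractf sum_distrib_left p_def)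

lemma sum_a_mult_l_ge: "1 / (1 + c) \<le> (\<Sum>i\<in>UNIV. a i * l i)"
proof -
  have "1 / (1 + c) = T * (1 / ((1 + c) * T))"
    using sum_l_pos by simp
  also have "\<dots> = (\<Sum>i\<in>UNIV. l i * (1 / ((1 + c) * T)))"
    by (rule sum_distrib_right)
  also have "\<dots> \<le> (\<Sum>i\<in>UNIV. l i * a i)"
    by (intro sum_mono mult_left_mono a_ge l_nonneg)
  finally show ?thesis by (simp add: mult.commute)
qed

lemma sum_a_mult_l_le: "(\<Sum>i\<in>UNIV. a i * l i) \<le> p / (1 + c * p)"
proof -
  have "c * T * (p^2 / (T * (1 + c * p))) \<le> c * T * sum a UNIV"
    using sum_a_ge c_pos sum_l_pos by (intro mult_left_mono) auto
  moreover have "c * T * (p^2 / (T * (1 + c * p))) = p - p / (1 + c * p)"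
    using sum_l_pos one_add_cp_ge_1 by (simp add: divide_simps power2_eq_square) (simp add: algebra_simps)
  ultimately show ?thesis by (simp add: sum_a_mult_l)
qed

lemma sum_similarly_ordered_mult_le:
  assumes similar: "\<And>i j. 0 \<le> (x i - x j) * (a i - a j)" and "0 \<le> sum x UNIV"
  shows "(\<Sum>i\<in>UNIV. x i * (a i * l i)) \<le> sum x UNIV / (1 + c * p)"
proof -
  \<comment> \<open>\<open>a i * l i = 1 - c T a i\<close> is ordered opposite to \<open>a\<close>, hence to \<open>x\<close>.\<close>
  have "(x i - x j) * (a i * l i - a j * l j) = - (c * T) * ((x i - x j) * (a i - a j))" for i j
    by (simp add: a_mult_l algebra_simps)
  then have "p * (\<Sum>i\<in>UNIV. x i * (a i * l i)) \<le> sum x UNIV * (\<Sum>i\<in>UNIV. a i * l i)"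
    using Chebyshev_sum_upper_pairwise[of UNIV x "\<lambda>i. a i * l i"] similar c_pos sum_l_pos
    by (simp add: p_def mult_nonneg_nonneg)
  also have "\<dots> \<le> sum x UNIV * (p / (1 + c * p))"
    using sum_a_mult_l_le assms(2) by (rule mult_left_mono)
  also have "\<dots> = p * (sum x UNIV / (1 + c * p))" by simp
  finally show ?thesis using p_ge_1 by (elim mult_left_le_imp_le) simp
qed

lemma a_mult_ratio_le_sum_a: "a i * ((1 + p * c) / (1 + c)) \<le> sum a UNIV"
proof -
  define k where "k = c / (1 + c)"
  have "k * a i \<le> a j" for j
  proof -
    have "k * a i \<le> k * (1 / (c * T))"
      using a_le c_pos by (intro mult_left_mono) (auto simp: k_def)
    also have "\<dots> = 1 / ((1 + c) * T)" using c_pos by (simp add: k_def)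
    finally show ?thesis using a_ge[of j] by linarith
  qed
  then have "a i - k * a i \<le> (\<Sum>j\<in>UNIV. a j - k * a i)"
    by (intro member_le_sum[where f="\<lambda>j. a j - k * a i"]) auto
  also have "\<dots> = sum a UNIV - p * k * a i" by (simp add: sum_subtractf p_def)
  finally have "a i * (1 - k + p * k) \<le> sum a UNIV" by (simp add: algebra_simps)
  moreover have "1 - k + p * k = (1 + p * c) / (1 + c)" using c_pos by (simp add: k_def field_simps)
  ultimately show ?thesis by simp
qed

lemma sum_nonneg_mult_a_le:
  assumes "\<And>i. 0 \<le> y i"
  shows "(\<Sum>i\<in>UNIV. y i * a i) \<le> sum y UNIV * sum a UNIV * (1 - (p - 1) * c / (p * (1 + c)))"
proof -
  define r where "r = (1 + p * c) / (1 + c)"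
  have r_pos: "0 < r" using c_pos p_ge_1 by (simp add: r_def add_pos_nonneg)
  have "r * (\<Sum>i\<in>UNIV. y i * a i) = (\<Sum>i\<in>UNIV. y i * (a i * r))"
    by (simp add: sum_distrib_left algebra_simps)
  also have "\<dots> \<le> (\<Sum>i\<in>UNIV. y i * sum a UNIV)"
    unfolding r_def using assms a_mult_ratio_le_sum_a by (intro sum_mono mult_left_mono)
  also have "\<dots> = sum y UNIV * sum a UNIV" by (simp add: sum_distrib_right)
  finally have "(\<Sum>i\<in>UNIV. y i * a i) \<le> sum y UNIV * sum a UNIV * (1 / r)"
    using r_pos by (simp add: field_simps)
  also have "\<dots> \<le> sum y UNIV * sum a UNIV * (1 - (p - 1) * c / (p * (1 + c)))"
    using one_add_div_le_contraction[of p c] p_ge_1 c_pos assms a_pos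
    by (intro mult_left_mono) (auto simp: r_def sum_nonneg less_imp_le)
  finally show ?thesis .
qed

lemma contraction_le_1: "1 - (p - 1) * c / (p * (1 + c)) \<le> 1"
  using c_pos p_ge_1 by simp

lemma sum_a_mult_T_ge: "p^2 / (1 + c * p) \<le> sum a UNIV * T"
  using mult_right_mono[OF sum_a_ge, of T] sum_l_pos by simp

lemma sum_a_mult_T_le: "sum a UNIV * T \<le> p / c"
  using mult_right_mono[OF sum_a_le, of T] sum_l_pos by simp

lemma sum_a2l_le: "(\<Sum>i\<in>UNIV. a i * a i * l i) \<le> sum a UNIV / (1 + c * p)"
proof -
  have "0 \<le> sum a UNIV" using a_pos by (simp add: sum_nonneg less_imp_le)
  then have "(\<Sum>i\<in>UNIV. a i * (a i * l i)) \<le> sum a UNIV / (1 + c * p)"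
    by (intro sum_similarly_ordered_mult_le) (simp_all add: mult_nonneg_nonneg)
  then show ?thesis by (simp add: mult.assoc)
qed

lemma sum_a3l_le: "(\<Sum>i\<in>UNIV. a i * a i * a i * l i) \<le> (\<Sum>i\<in>UNIV. a i * a i) / (1 + c * p)"
proof -
  have "(a i * a i - a j * a j) * (a i - a j) = (a i + a j) * (a i - a j)^2" for i j
    by (simp add: algebra_simps power2_eq_square)
  then have "(\<Sum>i\<in>UNIV. a i * a i * (a i * l i)) \<le> (\<Sum>i\<in>UNIV. a i * a i) / (1 + c * p)"
    using a_pos by (intro sum_similarly_ordered_mult_le) (simp_all add: sum_nonneg add_pos_pos less_imp_le)
  then show ?thesis by (simp add: mult.assoc)
qed

lemma sum_a2_le: "(\<Sum>i\<in>UNIV. a i * a i) \<le> (sum a UNIV)^2 * (1 - (p - 1) * c / (p * (1 + c)))"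
  using sum_nonneg_mult_a_le[of a] a_pos by (simp add: less_imp_le power2_eq_square)

lemma sum_a2_le_square: "(\<Sum>i\<in>UNIV. a i * a i) \<le> (sum a UNIV)^2"
  using sum_a2_le mult_left_mono[OF contraction_le_1, of "(sum a UNIV)^2"] by simp

lemma sum_a3l_le_contraction:
  "(\<Sum>i\<in>UNIV. a i * a i * a i * l i)
     \<le> (\<Sum>i\<in>UNIV. a i * a i * l i) * sum a UNIV * (1 - (p - 1) * c / (p * (1 + c)))"
proof -
  have "0 \<le> a i * a i * l i" for i using a_pos[of i] l_nonneg[of i] by simp
  from sum_nonneg_mult_a_le[of "\<lambda>i. a i * a i * l i", OF this] show ?thesis by (simp add: mult_ac)
qed

lemma sum_a3l_le_mult: "(\<Sum>i\<in>UNIV. a i * a i * a i * l i) \<le> (\<Sum>i\<in>UNIV. a i * a i * l i) * sum a UNIV"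
proof -
  have "a i * a i * a i * l i \<le> a i * a i * l i * sum a UNIV" for i
    using mult_left_mono[OF a_le_sum_a, of "a i * a i * l i" i] a_pos[of i] l_nonneg[of i]
    by (simp add: mult_ac)
  then have "(\<Sum>i\<in>UNIV. a i * a i * a i * l i) \<le> (\<Sum>i\<in>UNIV. a i * a i * l i * sum a UNIV)"
    by (rule sum_mono)
  also have "\<dots> = (\<Sum>i\<in>UNIV. a i * a i * l i) * sum a UNIV"
    by (rule sum_distrib_right[symmetric])
  finally show ?thesis .
qed

lemma sum_a2l2_eq:
  "- (\<Sum>i\<in>UNIV. a i * l i) + (1 + c) * (\<Sum>i\<in>UNIV. a i * a i * l i * l i)
     = - c * (\<Sum>i\<in>UNIV. (T * a i - a i * l i) * (a i * l i))"
proof -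
  have "- (\<Sum>i\<in>UNIV. a i * l i) + (1 + c) * (\<Sum>i\<in>UNIV. a i * a i * l i * l i)
      = (\<Sum>i\<in>UNIV. a i * l i * ((1 + c) * (a i * l i) - 1))"
    by (simp add: sum_distrib_left sum_subtractf algebra_simps)
  also have "\<dots> = (\<Sum>i\<in>UNIV. a i * l i * (- c * (T * a i - a i * l i)))"
    by (intro sum.cong) (simp_all add: a_mult_l algebra_simps)
  also have "\<dots> = - c * (\<Sum>i\<in>UNIV. (T * a i - a i * l i) * (a i * l i))"
    by (simp add: sum_distrib_left algebra_simps)
  finally show ?thesis .
qed

lemma sum_a2l2_ge:
  "- c * (sum a UNIV * T - (\<Sum>i\<in>UNIV. a i * l i)) / (1 + c * p)
     \<le> - (\<Sum>i\<in>UNIV. a i * l i) + (1 + c) * (\<Sum>i\<in>UNIV. a i * a i * l i * l i)"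
proof -
  define x where "x i = T * a i - a i * l i" for i
  have x_nonneg: "0 \<le> x i" for i
    using l_le_T[of i] a_pos[of i] by (simp add: x_def flip: right_diff_distrib')
  have "(x i - x j) * (a i - a j) = (1 + c) * T * (a i - a j)^2" for i j
    by (simp add: x_def a_mult_l algebra_simps power2_eq_square)
  then have "(\<Sum>i\<in>UNIV. x i * (a i * l i)) \<le> sum x UNIV / (1 + c * p)"
    using x_nonneg c_pos sum_l_pos by (intro sum_similarly_ordered_mult_le) (simp_all add: sum_nonneg)
  then have "c * (\<Sum>i\<in>UNIV. x i * (a i * l i)) \<le> c * (sum x UNIV / (1 + c * p))"
    using c_pos by (intro mult_left_mono) auto
  moreover have "sum x UNIV = sum a UNIV * T - (\<Sum>i\<in>UNIV. a i * l i)"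
    by (simp add: x_def sum_subtractf sum_distrib_right mult.commute)
  moreover have "- (\<Sum>i\<in>UNIV. a i * l i) + (1 + c) * (\<Sum>i\<in>UNIV. a i * a i * l i * l i)
      = - c * (\<Sum>i\<in>UNIV. x i * (a i * l i))"
    by (simp only: sum_a2l2_eq x_def)
  ultimately show ?thesis by simp
qed

lemma sum_a2l2_le: "- (\<Sum>i\<in>UNIV. a i * l i) + (1 + c) * (\<Sum>i\<in>UNIV. a i * a i * l i * l i) \<le> 0"
proof -
  have "0 \<le> (T * a i - a i * l i) * (a i * l i)" for i
    using l_le_T[of i] l_nonneg[of i] a_pos[of i] by (simp flip: left_diff_distrib)
  then show ?thesis unfolding sum_a2l2_eq using c_pos by (simp add: sum_nonneg)
qed

theorem eigenvalue_inequalities: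
  "(1 / (1 + c) \<le> (\<Sum>i\<in>UNIV. a i * l i) \<and> (\<Sum>i\<in>UNIV. a i * l i) \<le> p / (1 + c * p)) \<and>
   (p^2 / (1 + c * p) \<le> sum a UNIV * T \<and> sum a UNIV * T \<le> p / c) \<and>
   ((\<Sum>i\<in>UNIV. a i * a i * l i) \<le> sum a UNIV / (1 + c * p) \<and>
     sum a UNIV / (1 + c * p) \<le> sum a UNIV) \<and>
   ((\<Sum>i\<in>UNIV. a i * a i * a i * l i) \<le> (\<Sum>i\<in>UNIV. a i * a i) / (1 + c * p) \<and>
     (\<Sum>i\<in>UNIV. a i * a i) / (1 + c * p) \<le> (sum a UNIV)^2 / (1 + c * p)) \<and>
   ((\<Sum>i\<in>UNIV. a i * a i * a i * l i) \<le> (\<Sum>i\<in>UNIV. a i * a i * l i) * sum a UNIV) \<and>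
   ((\<Sum>i\<in>UNIV. a i * a i) \<le> (sum a UNIV)^2 * (1 - (p - 1) * c / (p * (1 + c)))) \<and>
   ((\<Sum>i\<in>UNIV. a i * a i * a i * l i)
      \<le> (\<Sum>i\<in>UNIV. a i * a i * l i) * sum a UNIV * (1 - (p - 1) * c / (p * (1 + c)))) \<and>
   (- c * (sum a UNIV * T - (\<Sum>i\<in>UNIV. a i * l i)) / (1 + c * p)
      \<le> - (\<Sum>i\<in>UNIV. a i * l i) + (1 + c) * (\<Sum>i\<in>UNIV. a i * a i * l i * l i) \<and>
    - (\<Sum>i\<in>UNIV. a i * l i) + (1 + c) * (\<Sum>i\<in>UNIV. a i * a i * l i * l i) \<le> 0)"
proof -
  have "0 \<le> sum a UNIV" using a_pos by (simp add: sum_nonneg less_imp_le)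
  then have "sum a UNIV / (1 + c * p) \<le> sum a UNIV"
    using one_add_cp_ge_1 by (simp add: divide_le_eq mult_le_cancel_left1)
  moreover have "(\<Sum>i\<in>UNIV. a i * a i) / (1 + c * p) \<le> (sum a UNIV)^2 / (1 + c * p)"
    using sum_a2_le_square one_add_cp_ge_1 by (simp add: divide_right_mono)
  ultimately show ?thesis
    using sum_a_mult_l_ge sum_a_mult_l_le sum_a_mult_T_ge sum_a_mult_T_le sum_a2l_le sum_a3l_le
      sum_a3l_le_mult sum_a2_le sum_a3l_le_contraction sum_a2l2_ge sum_a2l2_le
    by blast
qed

end

section \<open>Spectral theorem for real symmetric matrices\<close>

lemma inner_matrix_vector_symmetric:
  fixes A :: "real^'n^'n"
  assumes "transpose A = A"
  shows "x \<bullet> (A *v y) = (A *v x) \<bullet> y"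
  by (metis assms dot_lmul_matrix vector_transpose_matrix)

lemma rayleigh_maximizer_is_eigenvector:
  fixes A :: "real^'n^'n"
  assumes sym: "transpose A = A" and S: "subspace S" and inv: "\<And>x. x \<in> S \<Longrightarrow> A *v x \<in> S"
    and vS: "v \<in> S" and vv: "v \<bullet> v = 1"
    and max: "\<And>y. y \<in> S \<Longrightarrow> y \<bullet> (A *v y) \<le> (v \<bullet> (A *v v)) * (y \<bullet> y)"
  shows "A *v v = (v \<bullet> (A *v v)) *\<^sub>R v"
proof -
  define lam where "lam = v \<bullet> (A *v v)"
  define w where "w = A *v v - lam *\<^sub>R v"
  have wS: "w \<in> S" unfolding w_def using inv[OF vS] vS S by (simp add: subspace_diff subspace_scale)
  have vw: "v \<bullet> w = 0" by (simp add: w_def inner_diff_right vv lam_def)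
  have wAv: "w \<bullet> (A *v v) = w \<bullet> w"
    using vw by (simp add: w_def inner_diff_right inner_commute)
  have "w = 0"
  proof (rule ccontr)
    assume "w \<noteq> 0"
    define ww where "ww = w \<bullet> w"
    have ww0: "ww > 0" using \<open>w \<noteq> 0\<close> by (simp add: ww_def)
    define D where "D = lam * ww - w \<bullet> (A *v w)"
    \<comment> \<open>A step of size \<open>t\<close> from \<open>v\<close> towards \<open>w\<close> gains \<open>2 t ww\<close> over \<open>lam\<close> times the
      squared norm and loses only \<open>t\<^sup>2 D\<close>, contradicting maximality for small \<open>t\<close>.\<close>
    define t where "t = ww / (\<bar>D\<bar> + 1)"
    have t0: "t > 0" using ww0 by (simp add: t_def add_pos_nonneg)
    have yS: "v + t *\<^sub>R w \<in> S" using vS wS S by (simp add: subspace_add subspace_scale)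
    have "v \<bullet> (A *v w) = w \<bullet> (A *v v)"
      using inner_matrix_vector_symmetric[OF sym, of v w] by (simp add: inner_commute)
    then have "(v + t *\<^sub>R w) \<bullet> (A *v (v + t *\<^sub>R w)) = lam + 2 * t * ww + t^2 * (w \<bullet> (A *v w))"
      using wAv by (simp add: matrix_vector_right_distrib matrix_vector_mult_scaleR inner_add_left
          inner_add_right lam_def ww_def power2_eq_square algebra_simps)
    moreover have "(v + t *\<^sub>R w) \<bullet> (v + t *\<^sub>R w) = 1 + t^2 * ww"
      using vw vv by (simp add: inner_add_left inner_add_right ww_def power2_eq_square inner_commute)
    ultimately have "lam + 2 * t * ww + t^2 * (w \<bullet> (A *v w)) \<le> lam * (1 + t^2 * ww)"
      using max[OF yS] by (simp add: lam_def)
    hence "2 * t * ww \<le> t^2 * D" by (simp add: D_def algebra_simps)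
    hence "2 * ww \<le> t * D" using t0 by (simp add: power2_eq_square)
    also have "t * D \<le> t * \<bar>D\<bar>" using t0 by simp
    also have "t * \<bar>D\<bar> = ww * (\<bar>D\<bar> / (\<bar>D\<bar> + 1))" by (simp add: t_def)
    also have "\<dots> < ww * 1" using ww0 by (intro mult_strict_left_mono) auto
    finally show False using ww0 by simp
  qed
  thus ?thesis by (simp add: w_def lam_def)
qed

lemma invariant_subspace_has_unit_eigenvector:
  fixes A :: "real^'n^'n"
  assumes sym: "transpose A = A" and S: "subspace S" and inv: "\<And>x. x \<in> S \<Longrightarrow> A *v x \<in> S"
    and ne: "S \<noteq> {0}"
  obtains v \<mu> where "v \<in> S" "norm v = 1" "A *v v = \<mu> *\<^sub>R v"
proof -
  define K where "K = S \<inter> sphere 0 1"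
  have "compact K"
    using compact_Int_closed[OF compact_sphere closed_subspace[OF S], of 0 1]
    by (simp add: K_def Int_commute)
  moreover have "K \<noteq> {}"
  proof -
    obtain x where "x \<in> S" "x \<noteq> 0" using ne S subspace_0 by blast
    then have "(1 / norm x) *\<^sub>R x \<in> K" using S by (simp add: K_def subspace_scale)
    thus ?thesis by blast
  qed
  moreover have "continuous_on K (\<lambda>x. x \<bullet> (A *v x))"
    by (intro continuous_intros linear_continuous_on matrix_vector_mul_linear)
  ultimately obtain v where vK: "v \<in> K" and vmax: "\<And>y. y \<in> K \<Longrightarrow> y \<bullet> (A *v y) \<le> v \<bullet> (A *v v)"
    using continuous_attains_sup[of K "\<lambda>x. x \<bullet> (A *v x)"] by blast
  have vS: "v \<in> S" and vn: "norm v = 1" using vK by (auto simp: K_def)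
  have "y \<bullet> (A *v y) \<le> (v \<bullet> (A *v v)) * (y \<bullet> y)" if yS: "y \<in> S" for y
  proof (cases "y = 0")
    case False
    define r where "r = 1 / norm y"
    have "r *\<^sub>R y \<in> K" using yS S False by (simp add: K_def r_def subspace_scale)
    hence "r^2 * (y \<bullet> (A *v y)) \<le> v \<bullet> (A *v v)"
      using vmax[of "r *\<^sub>R y"] by (simp add: matrix_vector_mult_scaleR power2_eq_square mult.assoc)
    moreover have "r^2 = 1 / (y \<bullet> y)" by (simp add: r_def dot_square_norm power_one_over)
    moreover have "y \<bullet> y > 0" using False by simp
    ultimately show ?thesis by (simp add: field_simps)
  qed simp
  then have "A *v v = (v \<bullet> (A *v v)) *\<^sub>R v"
    using rayleigh_maximizer_is_eigenvector[OF sym S inv vS] vn by (simp add: dot_square_norm)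
  with vS vn that show ?thesis by blast
qed

lemma invariant_subspace_orthonormal_eigenbasis:
  fixes A :: "real^'n^'n"
  assumes sym: "transpose A = A"
  shows "subspace S \<Longrightarrow> (\<And>x. x \<in> S \<Longrightarrow> A *v x \<in> S) \<Longrightarrow>
    \<exists>B. B \<subseteq> S \<and> pairwise orthogonal B \<and> (\<forall>b\<in>B. norm b = 1 \<and> (\<exists>\<mu>. A *v b = \<mu> *\<^sub>R b)) \<and> S \<subseteq> span B"
proof (induction "dim S" arbitrary: S rule: less_induct)
  case (less S)
  show ?case
  proof (cases "S = {0}")
    case True
    thus ?thesis by (intro exI[of _ "{}"]) auto
  next
    case False
    obtain v \<mu> where vS: "v \<in> S" and vn: "norm v = 1" and ev: "A *v v = \<mu> *\<^sub>R v"
      using invariant_subspace_has_unit_eigenvector[OF sym less.prems False] by blast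
    have vv: "v \<bullet> v = 1" using vn by (simp add: dot_square_norm)
    define S' where "S' = {x \<in> S. v \<bullet> x = 0}"
    have sub': "subspace S'" using less.prems(1)
      unfolding S'_def subspace_def by (auto simp: inner_add_right)
    have inv': "A *v x \<in> S'" if "x \<in> S'" for x
    proof -
      have "v \<bullet> (A *v x) = (A *v v) \<bullet> x" by (rule inner_matrix_vector_symmetric[OF sym])
      also have "\<dots> = 0" using that by (simp add: ev S'_def)
      finally show ?thesis using that less.prems(2) by (simp add: S'_def)
    qed
    have "v \<notin> S'" using vv by (simp add: S'_def)
    moreover have "S' \<subseteq> S" by (auto simp: S'_def)
    ultimately have "S' \<subset> S" using vS by blast
    then have "dim S' < dim S"
      using sub' less.prems(1) by (intro dim_psubset) (simp add: span_eq_iff[THEN iffD2])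
    then obtain B' where B': "B' \<subseteq> S'" "pairwise orthogonal B'"
       "\<forall>b\<in>B'. norm b = 1 \<and> (\<exists>\<mu>. A *v b = \<mu> *\<^sub>R b)" "S' \<subseteq> span B'"
      using less.hyps[OF _ sub' inv'] by blast
    show ?thesis
    proof (intro exI[of _ "insert v B'"] conjI)
      show "insert v B' \<subseteq> S" using vS B'(1) by (auto simp: S'_def)
      show "pairwise orthogonal (insert v B')"
        using B'(1,2) by (intro pairwise_orthogonal_insert) (auto simp: orthogonal_def S'_def)
      show "\<forall>b\<in>insert v B'. norm b = 1 \<and> (\<exists>\<mu>. A *v b = \<mu> *\<^sub>R b)" using B'(3) vn ev by auto
      show "S \<subseteq> span (insert v B')"
      proof
        fix x assume xS: "x \<in> S"
        have "x - (v \<bullet> x) *\<^sub>R v \<in> S'"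
          using xS vS less.prems(1) vv by (simp add: S'_def subspace_diff subspace_scale inner_diff_right)
        hence "x - (v \<bullet> x) *\<^sub>R v \<in> span (insert v B')"
          using B'(4) span_mono[of B' "insert v B'"] by blast
        moreover have "(v \<bullet> x) *\<^sub>R v \<in> span (insert v B')" by (simp add: span_base span_scale)
        ultimately show "x \<in> span (insert v B')" using span_add by fastforce
      qed
    qed
  qed
qed

theorem symmetric_matrix_orthonormal_eigencolumns:
  fixes A :: "real^'n^'n"
  assumes sym: "transpose A = A"
  obtains Q d where "orthogonal_matrix Q" "\<And>j. A *v column j Q = d j *\<^sub>R column j Q"
proof -
  obtain B where B: "pairwise orthogonal B" "\<forall>b\<in>B. norm b = 1 \<and> (\<exists>\<mu>. A *v b = \<mu> *\<^sub>R b)"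
      "(UNIV :: (real^'n) set) \<subseteq> span B"
    using invariant_subspace_orthonormal_eigenbasis[OF sym, of UNIV] by auto
  have "0 \<notin> B" using B(2) by force
  then have "card B = dim B"
    using pairwise_orthogonal_independent[OF B(1)] by (simp add: dim_eq_card_independent)
  also have "\<dots> = dim (span B)" by simp
  also have "\<dots> = CARD('n)" using B(3) by (simp add: top.extremum_unique)
  finally have "card B = CARD('n)" .
  then obtain g where g: "bij_betw g (UNIV :: 'n set) B"
    using finite_same_card_bij[of "UNIV :: 'n set" B] pairwise_orthogonal_imp_finite[OF B(1)] by auto
  define Q :: "real^'n^'n" where "Q = (\<chi> i j. g j $ i)"
  have col: "column j Q = g j" for j by (simp add: Q_def column_def vec_eq_iff)
  have gB: "g j \<in> B" for j using g by (auto simp: bij_betw_def)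
  have "orthogonal_matrix Q"
    unfolding orthogonal_matrix_orthonormal_columns col
  proof (intro conjI allI impI)
    fix i show "norm (g i) = 1" using B(2) gB by auto
  next
    fix i j :: 'n assume "i \<noteq> j"
    hence "g i \<noteq> g j" using g by (auto simp: bij_betw_def inj_on_def)
    thus "orthogonal (g i) (g j)" using B(1) gB unfolding pairwise_def by blast
  qed
  moreover obtain d where "\<And>j. A *v column j Q = d j *\<^sub>R column j Q"
    using B(2) gB col choice[of "\<lambda>j \<mu>. A *v g j = \<mu> *\<^sub>R g j"] by auto
  ultimately show ?thesis using that by blast
qed

section \<open>Diagonal matrices and conjugation\<close>

definition diag_mat :: "('n::finite \<Rightarrow> real) \<Rightarrow> real^'n^'n" where
  "diag_mat d = (\<chi> i j. if i = j then d i else 0)"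

lemma diag_mat_mult: "diag_mat d ** diag_mat e = diag_mat (\<lambda>i. d i * e i)"
proof -
  have "(diag_mat d ** diag_mat e) $ i $ j = diag_mat (\<lambda>i. d i * e i) $ i $ j" for i j
  proof -
    have "(diag_mat d ** diag_mat e) $ i $ j
        = (\<Sum>k\<in>UNIV. (if i = k then d i else 0) * (if k = j then e k else 0))"
      by (simp add: diag_mat_def matrix_matrix_mult_def)
    also have "\<dots> = (\<Sum>k\<in>UNIV. if k = i then diag_mat (\<lambda>i. d i * e i) $ i $ j else 0)"
      by (rule sum.cong) (auto simp: diag_mat_def)
    finally show ?thesis by simp
  qed
  then show ?thesis by (simp add: vec_eq_iff)
qed

lemma diag_mat_add_scalar: "diag_mat d + k *\<^sub>R mat 1 = diag_mat (\<lambda>i. d i + k)"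
  by (simp add: diag_mat_def mat_def vec_eq_iff)

lemma diag_mat_one: "diag_mat (\<lambda>i. 1) = mat 1"
  by (simp add: diag_mat_def mat_def vec_eq_iff)

lemma trace_diag_mat: "trace (diag_mat d) = sum d UNIV"
  by (simp add: diag_mat_def trace_def)

lemma matrix_mul_diag_mat_eigencolumns:
  fixes A Q :: "real^'n^'n"
  assumes "\<And>j. A *v column j Q = d j *\<^sub>R column j Q"
  shows "A ** Q = Q ** diag_mat d"
proof -
  have "(Q ** diag_mat d) $ i $ j = Q $ i $ j * d j" for i j
  proof -
    have "(Q ** diag_mat d) $ i $ j = (\<Sum>k\<in>UNIV. Q $ i $ k * (if k = j then d k else 0))"
      by (simp add: diag_mat_def matrix_matrix_mult_def)
    also have "\<dots> = (\<Sum>k\<in>UNIV. if k = j then Q $ i $ j * d j else 0)"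
      by (rule sum.cong) auto
    finally show ?thesis by simp
  qed
  moreover have "(A ** Q) $ i $ j = (A *v column j Q) $ i" for i j
    by (simp add: matrix_matrix_mult_def matrix_vector_mult_def column_def)
  ultimately show ?thesis
    using assms by (simp add: vec_eq_iff column_def mult.commute)
qed

lemma pos_semidef_diagonalization:
  assumes "pos_semidef S"
  obtains Q d where "orthogonal_matrix Q" "\<And>i. 0 \<le> d i" "S = Q ** diag_mat d ** transpose Q"
proof -
  have "transpose S = S" using assms by (simp add: pos_semidef_def symmetric_matrix_def)
  then obtain Q d where Q: "orthogonal_matrix Q" and ev: "\<And>j. S *v column j Q = d j *\<^sub>R column j Q"
    using symmetric_matrix_orthonormal_eigencolumns by blast
  have "d j \<ge> 0" for j
  proof -
    have "column j Q \<bullet> (S *v column j Q) = d j * (column j Q \<bullet> column j Q)" using ev by simp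
    also have "\<dots> = d j"
      using Q by (simp add: orthogonal_matrix_orthonormal_columns dot_square_norm)
    finally show ?thesis using assms by (metis pos_semidef_def)
  qed
  moreover have "S = Q ** diag_mat d ** transpose Q"
  proof -
    have "S = S ** (Q ** transpose Q)" using Q by (simp add: orthogonal_matrix_def)
    also have "\<dots> = Q ** diag_mat d ** transpose Q"
      by (simp add: matrix_mul_assoc matrix_mul_diag_mat_eigencolumns[OF ev])
    finally show ?thesis .
  qed
  ultimately show ?thesis using Q that by blast
qed

lemma matrix_inv_left_right:
  fixes A :: "'a::semiring_1^'n^'n"
  assumes "invertible A"
  shows "A ** matrix_inv A = mat 1" "matrix_inv A ** A = mat 1"
  using someI_ex[of "\<lambda>A'. A ** A' = mat 1 \<and> A' ** A = mat 1"] assms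
  by (auto simp: invertible_def matrix_inv_def)

lemma matrix_inv_unique:
  fixes A B :: "'a::semiring_1^'n^'n"
  assumes "A ** B = mat 1" "B ** A = mat 1"
  shows "matrix_inv A = B"
proof -
  have inv: "invertible A" using assms unfolding invertible_def by blast
  have "B = B ** (A ** matrix_inv A)" using matrix_inv_left_right(1)[OF inv] by simp
  also have "\<dots> = matrix_inv A" by (simp add: matrix_mul_assoc assms(2))
  finally show ?thesis by simp
qed

lemma similar_pos_semidef_diagonalization:
  fixes W S :: "real^'n^'n"
  assumes "pos_semidef S" "similar_mat W S"
  obtains R R' :: "real^'n^'n" and d :: "'n \<Rightarrow> real"
  where "R ** R' = mat 1" "R' ** R = mat 1" "\<And>i. 0 \<le> d i" "W = R' ** diag_mat d ** R"
proof -
  obtain P where P: "invertible P" and W: "W = matrix_inv P ** S ** P"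
    using assms(2) unfolding similar_mat_def by blast
  obtain Q d where Q: "orthogonal_matrix Q" and d: "\<And>i. 0 \<le> d i"
    and S: "S = Q ** diag_mat d ** transpose Q"
    using pos_semidef_diagonalization[OF assms(1)] by blast
  have "(transpose Q ** P) ** (matrix_inv P ** Q) = transpose Q ** (P ** matrix_inv P) ** Q"
    "(matrix_inv P ** Q) ** (transpose Q ** P) = matrix_inv P ** (Q ** transpose Q) ** P"
    by (simp_all add: matrix_mul_assoc)
  then have "(transpose Q ** P) ** (matrix_inv P ** Q) = mat 1"
    "(matrix_inv P ** Q) ** (transpose Q ** P) = mat 1"
    using Q matrix_inv_left_right[OF P] by (simp_all add: orthogonal_matrix_def)
  moreover have "W = (matrix_inv P ** Q) ** diag_mat d ** (transpose Q ** P)"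
    by (simp add: W S matrix_mul_assoc)
  ultimately show ?thesis using that d by blast
qed

lemma trace_conjugate:
  fixes R R' X :: "real^'n^'n"
  assumes "R ** R' = mat 1"
  shows "trace (R' ** X ** R) = trace X"
proof -
  have "trace (R' ** X ** R) = trace (R ** (R' ** X))" by (rule trace_mul_sym)
  also have "\<dots> = trace X" by (simp add: assms matrix_mul_assoc)
  finally show ?thesis .
qed

lemma conjugate_mult:
  fixes R R' X Y :: "real^'n^'n"
  assumes "R ** R' = mat 1"
  shows "(R' ** X ** R) ** (R' ** Y ** R) = R' ** (X ** Y) ** R"
proof -
  have "(R' ** X ** R) ** (R' ** Y ** R) = R' ** X ** (R ** R') ** Y ** R"
    by (simp only: matrix_mul_assoc)
  also have "\<dots> = R' ** (X ** Y) ** R" by (simp add: assms matrix_mul_assoc)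
  finally show ?thesis .
qed

lemma matrix_add_rdistrib: "(A + B) ** C = A ** C + B ** C"
  by (vector matrix_matrix_mult_def sum.distrib[symmetric] field_simps)

lemma conjugate_add_scalar:
  fixes R R' X :: "real^'n^'n"
  assumes "R' ** R = mat 1"
  shows "R' ** X ** R + k *\<^sub>R mat 1 = R' ** (X + k *\<^sub>R mat 1) ** R"
  using assms by (simp add: matrix_add_ldistrib matrix_add_rdistrib matrix_scalar_ac
      flip: scalar_matrix_assoc)

lemma matrix_inv_conjugate_diag_mat:
  fixes R R' :: "real^'n^'n"
  assumes RR': "R ** R' = mat 1" and R'R: "R' ** R = mat 1" and d: "\<And>i. d i \<noteq> 0"
  shows "matrix_inv (R' ** diag_mat d ** R) = R' ** diag_mat (\<lambda>i. 1 / d i) ** R"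
proof (rule matrix_inv_unique)
  have "diag_mat d ** diag_mat (\<lambda>i. 1 / d i) = mat 1" "diag_mat (\<lambda>i. 1 / d i) ** diag_mat d = mat 1"
    using d by (simp_all add: diag_mat_mult diag_mat_one)
  then show "(R' ** diag_mat d ** R) ** (R' ** diag_mat (\<lambda>i. 1 / d i) ** R) = mat 1"
    "(R' ** diag_mat (\<lambda>i. 1 / d i) ** R) ** (R' ** diag_mat d ** R) = mat 1"
    unfolding conjugate_mult[OF RR'] using R'R by simp_all
qed

section \<open>The trace inequalities\<close>

theorem lemmaA1:
  fixes W :: "real^'n^'n" and c :: real
  assumes sim: "\<exists>S. pos_semidef S \<and> similar_mat W S"
    and trW: "trace W > 0"
    and c: "c > 0"
  defines "p \<equiv> real CARD('n)"
    and "V \<equiv> matrix_inv (W + (c * trace W) *\<^sub>R mat 1)"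
  shows
    "(1 / (1 + c) \<le> trace (V ** W) \<and> trace (V ** W) \<le> p / (1 + c * p)) \<and>
     (p^2 / (1 + c * p) \<le> trace V * trace W \<and> trace V * trace W \<le> p / c) \<and>
     (trace (V ** V ** W) \<le> trace V / (1 + c * p) \<and> trace V / (1 + c * p) \<le> trace V) \<and>
     (trace (V ** V ** V ** W) \<le> trace (V ** V) / (1 + c * p) \<and>
       trace (V ** V) / (1 + c * p) \<le> (trace V)^2 / (1 + c * p)) \<and>
     (trace (V ** V ** V ** W) \<le> trace (V ** V ** W) * trace V) \<and>
     (trace (V ** V) \<le> (trace V)^2 * (1 - (p - 1) * c / (p * (1 + c)))) \<and>
     (trace (V ** V ** V ** W) \<le> trace (V ** V ** W) * trace V * (1 - (p - 1) * c / (p * (1 + c)))) \<and>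
     (- c * (trace V * trace W - trace (V ** W)) / (1 + c * p)
        \<le> - trace (V ** W) + (1 + c) * trace (V ** V ** W ** W) \<and>
     - trace (V ** W) + (1 + c) * trace (V ** V ** W ** W) \<le> 0)"
proof -
  obtain S where "pos_semidef S" "similar_mat W S" using sim by blast
  then obtain R R' :: "real^'n^'n" and d :: "'n \<Rightarrow> real"
    where RR': "R ** R' = mat 1" and R'R: "R' ** R = mat 1"
      and d: "\<And>i. 0 \<le> d i" and W: "W = R' ** diag_mat d ** R"
    using similar_pos_semidef_diagonalization by blast
  have trW_eq: "trace W = sum d UNIV" by (simp add: W trace_conjugate[OF RR'] trace_diag_mat)
  define a where "a i = 1 / (d i + c * trace W)" for i
  have weights: "resolvent_weights d a c"
    using d trW c by unfold_locales (simp_all add: a_def trW_eq)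
  have "0 < d i + c * trace W" for i using d[of i] trW c by (intro add_nonneg_pos mult_pos_pos)
  then have "d i + c * trace W \<noteq> 0" for i by (metis less_irrefl)
  moreover have "W + k *\<^sub>R mat 1 = R' ** diag_mat (\<lambda>i. d i + k) ** R" for k
    by (simp add: W conjugate_add_scalar[OF R'R] diag_mat_add_scalar)
  ultimately have V: "V = R' ** diag_mat a ** R"
    unfolding V_def a_def by (simp add: matrix_inv_conjugate_diag_mat[OF RR' R'R])
  show ?thesis
    using resolvent_weights.eigenvalue_inequalities[OF weights]
    by (simp add: p_def V W trW_eq conjugate_mult[OF RR'] diag_mat_mult trace_conjugate[OF RR']
        trace_diag_mat)
qed

end
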